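(* Let $\mathcal F$ be a filtration array, $E=(E_{m,n})_{m,n\in\mathbb N}$ a nonnegative process adapted to $\mathcal F$, and $S=(S_n)_{n\in\mathbb N}$ a process adapted to $\mathcal F_{\infty,\bullet}$. If $E$ has the asymptotic supermartingale property (in $L_1$, for $\mathcal F$, uniformly in $\mathcal P$) and $E$ converges to $S$ in $L_1$ uniformly in $\mathcal P$, then $S$ is a supermartingale for $\mathcal P$ with respect to $\mathcal F_{\infty,\bullet}$.
   Context: $(\Omega,\mathcal A)$ is a measurable space, $\mathcal P$ a set of probability measures on it, $\mathbb N=\{0,1,\dots\}$. A filtration array is a family $(\mathcal F_{m,n})_{m,n\in\mathbb N}$ of sub-$\sigma$-algebras with $\mathcal F_{m,n}\subset\mathcal F_{m+1,n}\cap\mathcal F_{m,n+1}$; $\mathcal F_{\infty,n}:=\sigma(\bigcup_m\mathcal F_{m,n})$. Adapted means $E_{m,n}$ is $\mathcal F_{m,n}$-measurable. For $P\in\mathcal P$, $\delta_{m,n}=\mathbb E_P[E_{m,n+1}\mid\mathcal F_{m,n}]-E_{m,n}$ if $E_{m,n+1}$ is $P$-integrable and $\delta_{m,n}=\infty$ otherwise; $x^+=\max\{x,0\}$. The asymptotic supermartingale property: $\lim_m\sup_{P\in\mathcal P}\mathbb E_P[\delta_{m,n}^+]=0$ for every $n$. $E$ converges to $S$ in $L_1$ uniformly in $\mathcal P$ if all $E_{m,n},S_n$ are $P$-integrable for all $P\in\mathcal P$ and $\lim_m\sup_{P\in\mathcal P}\mathbb E_P[|E_{m,n}-S_n|]=0$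 for every $n$. A supermartingale for $\mathcal P$ w.r.t. a filtration $\mathcal G$ is a $\mathcal G$-adapted process with each $S_n$ $P$-integrable and $\mathbb E_P[S_{n+1}\mid\mathcal G_n]\le S_n$ $P$-a.s. for all $P\in\mathcal P$, $n$. *)

theory Defs
  imports "HOL-Probability.Probability"
begin

text \<open>Sub-sigma-algebras of the measurable space M are represented as measures
  whose space and sets are used (the measure itself is irrelevant).\<close>

definition filtration_array :: "'a measure \<Rightarrow> (nat \<Rightarrow> nat \<Rightarrow> 'a measure) \<Rightarrow> bool" where
  "filtration_array M F \<longleftrightarrow>
     (\<forall>m n. subalgebra M (F m n)) \<and>
     (\<forall>m n. sets (F m n) \<subseteq> sets (F (Suc m) n) \<inter> sets (F m (Suc n)))"

definition Finf :: "'a measure \<Rightarrow> (nat \<Rightarrow> nat \<Rightarrow> 'a measure) \<Rightarrow> nat \<Rightarrow> 'a measure" where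
  "Finf M F n = sigma (space M) (\<Union>m. sets (F m n))"

definition delta_pos_exp ::
  "'a measure \<Rightarrow> (nat \<Rightarrow> nat \<Rightarrow> 'a measure) \<Rightarrow> (nat \<Rightarrow> nat \<Rightarrow> 'a \<Rightarrow> real) \<Rightarrow> nat \<Rightarrow> nat \<Rightarrow> ennreal" where
  "delta_pos_exp P F E m n =
     (if integrable P (E m (Suc n))
      then \<integral>\<^sup>+ x. ennreal (max 0 (real_cond_exp P (F m n) (E m (Suc n)) x - E m n x)) \<partial>P
      else \<infinity>)"

definition asymptotic_supermartingale ::
  "'a measure set \<Rightarrow> (nat \<Rightarrow> nat \<Rightarrow> 'a measure) \<Rightarrow> (nat \<Rightarrow> nat \<Rightarrow> 'a \<Rightarrow> real) \<Rightarrow> bool" where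
  "asymptotic_supermartingale Ps F E \<longleftrightarrow>
     (\<forall>n. (\<lambda>m. SUP P\<in>Ps. delta_pos_exp P F E m n) \<longlonglongrightarrow> 0)"

definition uniform_L1_conv ::
  "'a measure set \<Rightarrow> (nat \<Rightarrow> nat \<Rightarrow> 'a \<Rightarrow> real) \<Rightarrow> (nat \<Rightarrow> 'a \<Rightarrow> real) \<Rightarrow> bool" where
  "uniform_L1_conv Ps E S \<longleftrightarrow>
     (\<forall>P\<in>Ps. (\<forall>m n. integrable P (E m n)) \<and> (\<forall>n. integrable P (S n))) \<and>
     (\<forall>n. (\<lambda>m. SUP P\<in>Ps. \<integral>\<^sup>+ x. ennreal \<bar>E m n x - S n x\<bar> \<partial>P) \<longlonglongrightarrow> 0)"

definition supermartingale_for ::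
  "'a measure set \<Rightarrow> (nat \<Rightarrow> 'a measure) \<Rightarrow> (nat \<Rightarrow> 'a \<Rightarrow> real) \<Rightarrow> bool" where
  "supermartingale_for Ps G S \<longleftrightarrow>
     (\<forall>n. S n \<in> borel_measurable (G n)) \<and>
     (\<forall>P\<in>Ps. \<forall>n. integrable P (S n) \<and>
        (AE x in P. real_cond_exp P (G n) (S (Suc n)) x \<le> S n x))"

end

theory Submission
  imports Defs
begin

text \<open>
  Fix P and n, and let A be a set of some F(k,n). For m \<ge> k the defining property of conditional
  expectation bounds the integral of E(m,n+1) over A by that of E(m,n) plus the expectation of the
  positive part of \<delta>(m,n); letting m \<rightarrow> \<infinity> shows that the integral of S(n+1) over A is at most
  that of S(n). These sets A form an algebra generating F(\<infinity>,n), and every set of the generated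
  \<sigma>-algebra is approximated by sets of the algebra in the finite measure |S(n) - S(n+1)| dP, so
  the inequality extends to all of F(\<infinity>,n), which is the supermartingale inequality.
\<close>

definition sym_diff_closure :: "'a measure \<Rightarrow> 'a set set \<Rightarrow> 'a set set" where
  "sym_diff_closure N G = {B. \<forall>e>0. \<exists>A\<in>G. measure N (sym_diff A B) < e}"

lemma sym_diff_closureI:
  "(\<And>e. 0 < e \<Longrightarrow> \<exists>A\<in>G. measure N (sym_diff A B) < e) \<Longrightarrow> B \<in> sym_diff_closure N G"
  by (simp add: sym_diff_closure_def)

lemma sym_diff_closureD:
  "B \<in> sym_diff_closure N G \<Longrightarrow> 0 < e \<Longrightarrow> \<exists>A\<in>G. measure N (sym_diff A B) < e"
  by (simp add: sym_diff_closure_def)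

lemma subset_sym_diff_closure: "G \<subseteq> sym_diff_closure N G"
proof
  fix A assume "A \<in> G"
  then show "A \<in> sym_diff_closure N G"
    by (intro sym_diff_closureI bexI[of _ A]) auto
qed

lemma (in finite_measure) measure_sym_diff_triangle:
  assumes "A \<in> sets M" "B \<in> sets M" "C \<in> sets M"
  shows "measure M (sym_diff A C) \<le> measure M (sym_diff A B) + measure M (sym_diff B C)"
proof -
  have "measure M (sym_diff A C) \<le> measure M (sym_diff A B \<union> sym_diff B C)"
    using assms by (intro finite_measure_mono) auto
  also have "\<dots> \<le> measure M (sym_diff A B) + measure M (sym_diff B C)"
    using assms by (intro measure_Un_le) auto
  finally show ?thesis .
qed

lemma (in finite_measure) measure_sym_diff_Un_le:
  assumes "A \<in> sets M" "A' \<in> sets M" "B \<in> sets M" "B' \<in> sets M"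
  shows "measure M (sym_diff (A \<union> A') (B \<union> B'))
    \<le> measure M (sym_diff A B) + measure M (sym_diff A' B')"
proof -
  have "measure M (sym_diff (A \<union> A') (B \<union> B'))
      \<le> measure M (sym_diff A B \<union> sym_diff A' B')"
    using assms by (intro finite_measure_mono) auto
  also have "\<dots> \<le> measure M (sym_diff A B) + measure M (sym_diff A' B')"
    using assms by (intro measure_Un_le) auto
  finally show ?thesis .
qed

lemma (in finite_measure) Un_in_sym_diff_closure:
  assumes G: "G \<subseteq> sets M" and Un: "\<And>A A'. A \<in> G \<Longrightarrow> A' \<in> G \<Longrightarrow> A \<union> A' \<in> G"
    and B: "B \<in> sym_diff_closure M G" "B \<in> sets M"
    and B': "B' \<in> sym_diff_closure M G" "B' \<in> sets M"
  shows "B \<union> B' \<in> sym_diff_closure M G"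
proof (rule sym_diff_closureI)
  fix e :: real assume "0 < e"
  then obtain A A' where A: "A \<in> G" "measure M (sym_diff A B) < e / 2"
    and A': "A' \<in> G" "measure M (sym_diff A' B') < e / 2"
    using sym_diff_closureD[OF B(1), of "e / 2"] sym_diff_closureD[OF B'(1), of "e / 2"] by auto
  then have "measure M (sym_diff (A \<union> A') (B \<union> B')) < e"
    using measure_sym_diff_Un_le[of A A' B B'] G B(2) B'(2) by force
  then show "\<exists>A\<in>G. measure M (sym_diff A (B \<union> B')) < e"
    using A(1) A'(1) Un by blast
qed

lemma (in finite_measure) UN_in_sym_diff_closure:
  fixes Bs :: "nat \<Rightarrow> 'a set"
  assumes G: "G \<subseteq> sets M" and empty: "{} \<in> G"
    and Un: "\<And>A A'. A \<in> G \<Longrightarrow> A' \<in> G \<Longrightarrow> A \<union> A' \<in> G"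
    and Bs: "\<And>i. Bs i \<in> sym_diff_closure M G" "\<And>i. Bs i \<in> sets M"
  shows "(\<Union>i. Bs i) \<in> sym_diff_closure M G"
proof -
  define C where "C K = (\<Union>i<K. Bs i)" for K
  have C_M: "C K \<in> sets M" for K
    using Bs(2) by (auto simp: C_def)
  have C_closure: "C K \<in> sym_diff_closure M G" for K
  proof (induction K)
    case 0
    show ?case
      using empty subset_sym_diff_closure by (force simp: C_def)
  next
    case (Suc K)
    have "C (Suc K) = C K \<union> Bs K"
      by (auto simp: C_def lessThan_Suc)
    then show ?case
      using Un_in_sym_diff_closure[OF G Un Suc.IH C_M Bs] by simp
  qed
  have "incseq C"
    by (force simp: C_def incseq_def)
  moreover have "(\<Union>K. C K) = (\<Union>i. Bs i)"
    by (auto simp: C_def)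
  ultimately have lim: "(\<lambda>K. measure M (C K)) \<longlonglongrightarrow> measure M (\<Union>i. Bs i)"
    using finite_Lim_measure_incseq[of C] C_M by auto
  show ?thesis
  proof (rule sym_diff_closureI)
    fix e :: real assume "0 < e"
    have "\<forall>\<^sub>F K in sequentially. measure M (\<Union>i. Bs i) - e / 2 < measure M (C K)"
      using lim \<open>0 < e\<close> by (intro order_tendstoD(1)) auto
    then obtain K where K: "measure M (\<Union>i. Bs i) - e / 2 < measure M (C K)"
      by (auto simp: eventually_sequentially)
    have "C K \<subseteq> (\<Union>i. Bs i)"
      by (auto simp: C_def)
    moreover have "sym_diff (C K) (\<Union>i. Bs i) = (\<Union>i. Bs i) - C K"
      using \<open>C K \<subseteq> (\<Union>i. Bs i)\<close> by blast
    ultimately have "measure M (sym_diff (C K) (\<Union>i. Bs i))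
        = measure M (\<Union>i. Bs i) - measure M (C K)"
      using finite_measure_Diff[of "\<Union>i. Bs i" "C K"] C_M Bs(2) by auto
    with K have "measure M (sym_diff (C K) (\<Union>i. Bs i)) < e / 2"
      by simp
    moreover obtain A where "A \<in> G" "measure M (sym_diff A (C K)) < e / 2"
      using sym_diff_closureD[OF C_closure, of "e / 2"] \<open>0 < e\<close> by auto
    ultimately show "\<exists>A\<in>G. measure M (sym_diff A (\<Union>i. Bs i)) < e"
      using measure_sym_diff_triangle[of A "C K" "\<Union>i. Bs i"] G C_M Bs(2) by force
  qed
qed

lemma (in algebra) sigma_sets_subset_sym_diff_closure:
  assumes N: "finite_measure N" and M_sets: "M \<subseteq> sets N" and space_N: "space N = \<Omega>"
  shows "sigma_sets \<Omega> M \<subseteq> sym_diff_closure N M"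
proof
  interpret N: finite_measure N by fact
  have sigma_N: "sigma_sets \<Omega> M \<subseteq> sets N"
    using M_sets space_N sets.sigma_sets_subset by blast
  fix B assume "B \<in> sigma_sets \<Omega> M"
  with Int_stable space_closed show "B \<in> sym_diff_closure N M"
  proof (induction rule: sigma_sets_induct_disjoint)
    case (basic B)
    then show ?case
      using subset_sym_diff_closure by blast
  next
    case empty
    then show ?case
      using subset_sym_diff_closure by blast
  next
    case (compl B)
    show ?case
    proof (rule sym_diff_closureI)
      fix e :: real assume "0 < e"
      then obtain A where A: "A \<in> M" "measure N (sym_diff A B) < e"
        using sym_diff_closureD[OF compl.IH] by blast
      moreover have "sym_diff (\<Omega> - A) (\<Omega> - B) = sym_diff A B"
        using A(1) space_closed sigma_sets_into_sp[OF space_closed compl.hyps] by blast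
      ultimately show "\<exists>A\<in>M. measure N (sym_diff A (\<Omega> - B)) < e"
        by (intro bexI[of _ "\<Omega> - A"]) auto
    qed
  next
    case (union Bs)
    then show ?case
      using sigma_N by (intro N.UN_in_sym_diff_closure M_sets) auto
  qed
qed

lemma finite_measure_density_abs:
  fixes f :: "'a \<Rightarrow> real"
  assumes "integrable M f"
  shows "finite_measure (density M (\<lambda>x. ennreal \<bar>f x\<bar>))"
proof (rule finite_measureI)
  have "emeasure (density M (\<lambda>x. ennreal \<bar>f x\<bar>)) (space M)
      = (\<integral>\<^sup>+ x. ennreal (norm (f x)) \<partial>M)"
    using assms by (subst emeasure_density) (auto intro!: nn_integral_cong)
  also have "\<dots> < \<infinity>"
    using assms by (simp add: integrable_iff_bounded)
  finally show "emeasure (density M (\<lambda>x. ennreal \<bar>f x\<bar>))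
      (space (density M (\<lambda>x. ennreal \<bar>f x\<bar>))) \<noteq> \<infinity>"
    by simp
qed

lemma abs_set_integral_diff_le_measure_density:
  fixes f :: "'a \<Rightarrow> real"
  assumes f: "integrable M f" and A: "A \<in> sets M" and B: "B \<in> sets M"
  shows "\<bar>(\<integral>x\<in>B. f x \<partial>M) - (\<integral>x\<in>A. f x \<partial>M)\<bar>
           \<le> measure (density M (\<lambda>x. ennreal \<bar>f x\<bar>)) (sym_diff A B)"
proof -
  have AB: "sym_diff A B \<in> sets M"
    using A B by auto
  have "(\<integral>x\<in>B. f x \<partial>M) - (\<integral>x\<in>A. f x \<partial>M)
      = (\<integral>x. indicator B x * f x - indicator A x * f x \<partial>M)"
    using integrable_mult_indicator[OF A f] integrable_mult_indicator[OF B f]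
    by (simp add: set_lebesgue_integral_def)
  also have "\<bar>\<dots>\<bar> \<le> (\<integral>x. \<bar>indicator B x * f x - indicator A x * f x\<bar> \<partial>M)"
    using integral_norm_bound[of M "\<lambda>x. indicator B x * f x - indicator A x * f x"] by simp
  also have "\<dots> = (\<integral>x. \<bar>f x\<bar> * indicator (sym_diff A B) x \<partial>M)"
    by (intro Bochner_Integration.integral_cong) (auto simp: indicator_def)
  also have "\<dots> = enn2real (\<integral>\<^sup>+ x. ennreal (\<bar>f x\<bar> * indicator (sym_diff A B) x) \<partial>M)"
    using integrable_real_mult_indicator[OF AB integrable_abs[OF f]]
    by (intro integral_eq_nn_integral) auto
  also have "\<dots> = enn2real (\<integral>\<^sup>+ x. ennreal \<bar>f x\<bar> * indicator (sym_diff A B) x \<partial>M)"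
    by (intro arg_cong[where f = enn2real] nn_integral_cong) (simp add: indicator_def)
  also have "\<dots> = measure (density M (\<lambda>x. ennreal \<bar>f x\<bar>)) (sym_diff A B)"
    using f AB by (simp add: measure_def emeasure_density)
  finally show ?thesis .
qed

lemma (in algebra) set_integral_mono_sigma_sets:
  fixes f g :: "'a \<Rightarrow> real"
  assumes f: "integrable P f" and g: "integrable P g"
    and M_sets: "M \<subseteq> sets P" and space_P: "space P = \<Omega>"
    and le: "\<And>A. A \<in> M \<Longrightarrow> (\<integral>x\<in>A. f x \<partial>P) \<le> (\<integral>x\<in>A. g x \<partial>P)"
    and B: "B \<in> sigma_sets \<Omega> M"
  shows "(\<integral>x\<in>B. f x \<partial>P) \<le> (\<integral>x\<in>B. g x \<partial>P)"
proof -
  define h where "h x = g x - f x" for x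
  let ?N = "density P (\<lambda>x. ennreal \<bar>h x\<bar>)"
  have h: "integrable P h"
    unfolding h_def using f g by auto
  have set_integral_h: "(\<integral>x\<in>A. h x \<partial>P) = (\<integral>x\<in>A. g x \<partial>P) - (\<integral>x\<in>A. f x \<partial>P)"
    if "A \<in> sets P" for A
    unfolding h_def using integrable_mult_indicator[OF that f] integrable_mult_indicator[OF that g]
    by (intro set_integral_diff) (simp_all add: set_integrable_def)
  have BP: "B \<in> sets P"
    using B M_sets space_P sets.sigma_sets_subset by blast
  have "0 \<le> (\<integral>x\<in>B. h x \<partial>P)"
  proof (rule ccontr)
    assume "\<not> 0 \<le> (\<integral>x\<in>B. h x \<partial>P)"
    then have "0 < - (\<integral>x\<in>B. h x \<partial>P)"
      by simp
    moreover have "B \<in> sym_diff_closure ?N M"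
      using sigma_sets_subset_sym_diff_closure[OF finite_measure_density_abs[OF h]] M_sets space_P B
      by auto
    ultimately obtain A where A: "A \<in> M" "measure ?N (sym_diff A B) < - (\<integral>x\<in>B. h x \<partial>P)"
      using sym_diff_closureD by blast
    have "\<bar>(\<integral>x\<in>B. h x \<partial>P) - (\<integral>x\<in>A. h x \<partial>P)\<bar> \<le> measure ?N (sym_diff A B)"
      using A(1) M_sets BP by (intro abs_set_integral_diff_le_measure_density[OF h]) auto
    moreover have "0 \<le> (\<integral>x\<in>A. h x \<partial>P)"
      using le[OF A(1)] set_integral_h[of A] A(1) M_sets by auto
    ultimately show False
      using A(2) by linarith
  qed
  then show ?thesis
    using set_integral_h[OF BP] by simp
qed

lemma (in sigma_finite_subalgebra) real_cond_exp_le_of_set_integral_le: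
  assumes f: "integrable M f" and g: "integrable M g" and g_meas: "g \<in> borel_measurable F"
    and le: "\<And>A. A \<in> sets F \<Longrightarrow> (\<integral>x\<in>A. f x \<partial>M) \<le> (\<integral>x\<in>A. g x \<partial>M)"
  shows "AE x in M. real_cond_exp M F f x \<le> g x"
proof -
  define c where "c = real_cond_exp M F f"
  define B where "B = {x \<in> space M. g x < c x}"
  have c: "integrable M c" unfolding c_def using f by (rule real_cond_exp_int(1))
  have BF: "B \<in> sets F"
  proof -
    have [measurable]: "c \<in> borel_measurable F" "g \<in> borel_measurable F"
      using g_meas by (auto simp: c_def)
    have "B = {x \<in> space F. g x < c x}"
      using subalg by (simp add: B_def subalgebra_def)
    also have "\<dots> \<in> sets F"
      by measurable
    finally show ?thesis .
  qed
  then have BM: "B \<in> sets M"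
    using subalg by (auto simp: subalgebra_def)
  have int_B: "integrable M (\<lambda>x. indicator B x * (c x - g x))"
    using integrable_mult_indicator[OF BM Bochner_Integration.integrable_diff[OF c g]] by simp
  have nonneg: "0 \<le> indicator B x * (c x - g x)" for x
    by (auto simp: B_def indicator_def)
  have "(\<integral>x. indicator B x * (c x - g x) \<partial>M) = (\<integral>x\<in>B. c x \<partial>M) - (\<integral>x\<in>B. g x \<partial>M)"
    using integrable_mult_indicator[OF BM c] integrable_mult_indicator[OF BM g]
    by (simp add: set_lebesgue_integral_def right_diff_distrib)
  also have "(\<integral>x\<in>B. c x \<partial>M) = (\<integral>x\<in>B. f x \<partial>M)"
    unfolding c_def using real_cond_exp_intA[OF f BF] by simp
  finally have "(\<integral>x. indicator B x * (c x - g x) \<partial>M) \<le> 0"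
    using le[OF BF] by simp
  moreover have "0 \<le> (\<integral>x. indicator B x * (c x - g x) \<partial>M)"
    using nonneg by (simp add: Bochner_Integration.integral_nonneg)
  ultimately have "(\<integral>x. indicator B x * (c x - g x) \<partial>M) = 0"
    by linarith
  then have "AE x in M. indicator B x * (c x - g x) = 0"
    using integral_nonneg_eq_0_iff_AE[OF int_B] nonneg by simp
  with AE_space show ?thesis
    by eventually_elim (auto simp: c_def B_def indicator_def split: if_splits)
qed

lemma (in sigma_finite_subalgebra) set_integral_le_add_pos_part_cond_exp:
  fixes f g :: "'a \<Rightarrow> real"
  assumes f: "integrable M f" and g: "integrable M g" and A: "A \<in> sets F"
  shows "(\<integral>x\<in>A. f x \<partial>M)
    \<le> (\<integral>x\<in>A. g x \<partial>M) + (\<integral>x. max 0 (real_cond_exp M F f x - g x) \<partial>M)"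
proof -
  define d where "d x = max 0 (real_cond_exp M F f x - g x)" for x
  have AM: "A \<in> sets M"
    using A subalg by (auto simp: subalgebra_def)
  have c: "integrable M (real_cond_exp M F f)"
    using f by (rule real_cond_exp_int(1))
  then have d: "integrable M d"
    unfolding d_def using g by auto
  have d_nonneg: "0 \<le> d x" for x
    by (simp add: d_def)
  have set_int: "set_integrable M A h" if "integrable M h" for h :: "'a \<Rightarrow> real"
    unfolding set_integrable_def using integrable_mult_indicator[OF AM that] by simp
  have "(\<integral>x\<in>A. f x \<partial>M) = (\<integral>x\<in>A. real_cond_exp M F f x \<partial>M)"
    using real_cond_exp_intA[OF f A] .
  also have "\<dots> \<le> (\<integral>x\<in>A. g x + d x \<partial>M)"
    using c g d by (intro set_integral_mono set_int) (auto simp: d_def)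
  also have "\<dots> = (\<integral>x\<in>A. g x \<partial>M) + (\<integral>x\<in>A. d x \<partial>M)"
    using g d by (intro set_integral_add set_int)
  also have "(\<integral>x\<in>A. d x \<partial>M) \<le> (\<integral>x. d x \<partial>M)"
    unfolding set_lebesgue_integral_def
    using integrable_mult_indicator[OF AM d] d d_nonneg by (intro integral_mono) (auto simp: indicator_def)
  finally show ?thesis
    by (simp add: d_def)
qed

lemma tendsto_set_integral_of_L1:
  fixes X :: "nat \<Rightarrow> 'a \<Rightarrow> real"
  assumes X: "\<And>m. integrable M (X m)" and Y: "integrable M Y"
    and L1: "(\<lambda>m. \<integral>\<^sup>+ x. ennreal \<bar>X m x - Y x\<bar> \<partial>M) \<longlonglongrightarrow> 0" and A: "A \<in> sets M"
  shows "(\<lambda>m. \<integral>x\<in>A. X m x \<partial>M) \<longlonglongrightarrow> (\<integral>x\<in>A. Y x \<partial>M)"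
  unfolding set_lebesgue_integral_def
proof (rule tendsto_L1_int)
  show "(\<lambda>m. \<integral>\<^sup>+ x. norm (indicator A x *\<^sub>R X m x - indicator A x *\<^sub>R Y x) \<partial>M) \<longlonglongrightarrow> 0"
    by (rule tendsto_sandwich[OF _ _ tendsto_const L1])
       (auto intro!: always_eventually nn_integral_mono simp: indicator_def)
qed (use integrable_mult_indicator[OF A X] integrable_mult_indicator[OF A Y] in simp_all)

lemma tendsto_0_of_SUP_tendsto_0:
  fixes g :: "'b \<Rightarrow> nat \<Rightarrow> ennreal"
  assumes "(\<lambda>m. SUP P\<in>Ps. g P m) \<longlonglongrightarrow> 0" and "P \<in> Ps"
  shows "(\<lambda>m. g P m) \<longlonglongrightarrow> 0"
  by (rule tendsto_sandwich[of "\<lambda>_. 0" _ _ "\<lambda>m. SUP P\<in>Ps. g P m"])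
     (use assms in \<open>auto intro!: always_eventually SUP_upper\<close>)

lemma filtration_array_mono:
  assumes "filtration_array M F" and "k \<le> k'"
  shows "sets (F k n) \<subseteq> sets (F k' n)"
proof -
  have "sets (F m n) \<subseteq> sets (F (Suc m) n)" for m
    using assms(1) by (simp add: filtration_array_def)
  then show ?thesis
    using lift_Suc_mono_le[of "\<lambda>k. sets (F k n)"] assms(2) by simp
qed

lemma algebra_Union_filtration_array:
  assumes filt: "filtration_array M F"
  shows "algebra (space M) (\<Union>m. sets (F m n))"
proof -
  have space_F: "space (F m n) = space M" for m
    using filt by (simp add: filtration_array_def subalgebra_def)
  have union: "A \<union> B \<in> (\<Union>m. sets (F m n))" if "A \<in> sets (F k n)" "B \<in> sets (F k' n)" for A B k k'
  proof -
    have "A \<in> sets (F (max k k') n)" "B \<in> sets (F (max k k') n)"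
      using that filtration_array_mono[OF filt, of k "max k k'" n] filtration_array_mono[OF filt, of k' "max k k'" n]
      by auto
    then have "A \<union> B \<in> sets (F (max k k') n)"
      by simp
    then show ?thesis
      by blast
  qed
  have into_space: "A \<subseteq> space M" and compl: "space M - A \<in> sets (F k n)" if "A \<in> sets (F k n)" for A k
    using sets.sets_into_space[OF that] sets.compl_sets[OF that] by (simp_all add: space_F)
  show ?thesis
    unfolding algebra_iff_Un
  proof (intro conjI ballI)
    show "(\<Union>m. sets (F m n)) \<subseteq> Pow (space M)"
      using into_space by auto
    show "{} \<in> (\<Union>m. sets (F m n))"
      using sets.empty_sets[of "F 0 n"] by blast
    show "space M - A \<in> (\<Union>m. sets (F m n))" if "A \<in> (\<Union>m. sets (F m n))" for A
      using that compl by auto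
    show "A \<union> B \<in> (\<Union>m. sets (F m n))"
      if "A \<in> (\<Union>m. sets (F m n))" "B \<in> (\<Union>m. sets (F m n))" for A B
      using that union by auto
  qed
qed

lemma sets_Finf:
  assumes "filtration_array M F"
  shows "sets (Finf M F n) = sigma_sets (space M) (\<Union>m. sets (F m n))"
proof -
  interpret algebra "space M" "\<Union>m. sets (F m n)"
    by (rule algebra_Union_filtration_array[OF assms])
  show ?thesis
    unfolding Finf_def using space_closed by (rule sets_measure_of)
qed

lemma subalgebra_Finf:
  assumes "filtration_array M F"
  shows "subalgebra M (Finf M F n)"
  unfolding subalgebra_def
proof
  show "space (Finf M F n) = space M"
    by (simp add: Finf_def space_measure_of_conv)
  show "sets (Finf M F n) \<subseteq> sets M"
    unfolding sets_Finf[OF assms] using assms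
    by (intro sets.sigma_sets_subset) (auto simp: filtration_array_def subalgebra_def)
qed

lemma subalgebra_sets_eq:
  assumes "sets P = sets M" and "subalgebra M G"
  shows "subalgebra P G"
  using assms sets_eq_imp_space_eq[OF assms(1)] by (simp add: subalgebra_def)

lemma set_integral_Suc_le_on_generators:
  fixes E :: "nat \<Rightarrow> nat \<Rightarrow> 'a \<Rightarrow> real" and S :: "nat \<Rightarrow> 'a \<Rightarrow> real"
  assumes P: "prob_space P" "sets P = sets M" and filt: "filtration_array M F"
    and int_E: "\<And>m n. integrable P (E m n)" and int_S: "\<And>n. integrable P (S n)"
    and L1: "\<And>n. (\<lambda>m. \<integral>\<^sup>+ x. ennreal \<bar>E m n x - S n x\<bar> \<partial>P) \<longlonglongrightarrow> 0"
    and delta: "(\<lambda>m. delta_pos_exp P F E m n) \<longlonglongrightarrow> 0"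
    and A: "A \<in> sets (F k n)"
  shows "(\<integral>x\<in>A. S (Suc n) x \<partial>P) \<le> (\<integral>x\<in>A. S n x \<partial>P)"
proof -
  interpret prob_space P by (fact P(1))
  have subalg_F: "subalgebra P (F m n)" for m
    using filt subalgebra_sets_eq[OF P(2)] by (simp add: filtration_array_def)
  have AP: "A \<in> sets P"
    using A subalg_F by (auto simp: subalgebra_def)
  have step: "(\<integral>x\<in>A. E m (Suc n) x \<partial>P)
      \<le> (\<integral>x\<in>A. E m n x \<partial>P) + enn2real (delta_pos_exp P F E m n)"
    if "k \<le> m" for m
  proof -
    interpret finite_measure_subalgebra P "F m n"
      by unfold_locales (rule subalg_F)
    have "integrable P (\<lambda>x. max 0 (real_cond_exp P (F m n) (E m (Suc n)) x - E m n x))"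
      using int_E real_cond_exp_int(1)[OF int_E] by auto
    then have "delta_pos_exp P F E m n
        = ennreal (\<integral>x. max 0 (real_cond_exp P (F m n) (E m (Suc n)) x - E m n x) \<partial>P)"
      unfolding delta_pos_exp_def if_P[OF int_E] by (rule nn_integral_eq_integral) simp
    moreover have "A \<in> sets (F m n)"
      using filtration_array_mono[OF filt that] A by blast
    ultimately show ?thesis
      using set_integral_le_add_pos_part_cond_exp[OF int_E int_E] by simp
  qed
  have "(\<lambda>m. \<integral>x\<in>A. E m (Suc n) x \<partial>P) \<longlonglongrightarrow> (\<integral>x\<in>A. S (Suc n) x \<partial>P)"
    by (rule tendsto_set_integral_of_L1[OF int_E int_S L1 AP])
  moreover have "(\<lambda>m. (\<integral>x\<in>A. E m n x \<partial>P) + enn2real (delta_pos_exp P F E m n))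
      \<longlonglongrightarrow> (\<integral>x\<in>A. S n x \<partial>P) + enn2real 0"
    by (intro tendsto_add tendsto_set_integral_of_L1[OF int_E int_S L1 AP] tendsto_enn2real)
      (simp_all add: delta)
  ultimately show ?thesis
    using step by (intro LIMSEQ_le) auto
qed

lemma set_integral_Suc_le_on_Finf:
  fixes E :: "nat \<Rightarrow> nat \<Rightarrow> 'a \<Rightarrow> real" and S :: "nat \<Rightarrow> 'a \<Rightarrow> real"
  assumes P: "prob_space P" "sets P = sets M" and filt: "filtration_array M F"
    and int_E: "\<And>m n. integrable P (E m n)" and int_S: "\<And>n. integrable P (S n)"
    and L1: "\<And>n. (\<lambda>m. \<integral>\<^sup>+ x. ennreal \<bar>E m n x - S n x\<bar> \<partial>P) \<longlonglongrightarrow> 0"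
    and delta: "(\<lambda>m. delta_pos_exp P F E m n) \<longlonglongrightarrow> 0"
    and B: "B \<in> sets (Finf M F n)"
  shows "(\<integral>x\<in>B. S (Suc n) x \<partial>P) \<le> (\<integral>x\<in>B. S n x \<partial>P)"
proof (rule algebra.set_integral_mono_sigma_sets[OF algebra_Union_filtration_array[OF filt] int_S int_S])
  have "subalgebra P (F m n)" for m
    using filt subalgebra_sets_eq[OF P(2)] by (simp add: filtration_array_def)
  then show "(\<Union>m. sets (F m n)) \<subseteq> sets P"
    by (auto simp: subalgebra_def)
  show "space P = space M"
    using P(2) by (rule sets_eq_imp_space_eq)
  show "B \<in> sigma_sets (space M) (\<Union>m. sets (F m n))"
    using B by (simp add: sets_Finf[OF filt])
qed (use set_integral_Suc_le_on_generators[OF P filt int_E int_S L1 delta] in blast)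

theorem mainTheorem8:
  fixes M :: "'a measure" and Ps :: "'a measure set"
    and F :: "nat \<Rightarrow> nat \<Rightarrow> 'a measure"
    and E :: "nat \<Rightarrow> nat \<Rightarrow> 'a \<Rightarrow> real" and S :: "nat \<Rightarrow> 'a \<Rightarrow> real"
  assumes Ps: "\<And>P. P \<in> Ps \<Longrightarrow> prob_space P \<and> sets P = sets M"
    and filt: "filtration_array M F"
    and E_adapted: "\<And>m n. E m n \<in> borel_measurable (F m n)"
    and E_nonneg: "\<And>m n x. x \<in> space M \<Longrightarrow> 0 \<le> E m n x"
    and S_adapted: "\<And>n. S n \<in> borel_measurable (Finf M F n)"
    and asm: "asymptotic_supermartingale Ps F E"
    and conv: "uniform_L1_conv Ps E S"
  shows "supermartingale_for Ps (Finf M F) S"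
  unfolding supermartingale_for_def
proof (intro conjI allI ballI)
  show "S n \<in> borel_measurable (Finf M F n)" for n
    by (rule S_adapted)
  fix P n assume "P \<in> Ps"
  then have P: "prob_space P" "sets P = sets M"
    using Ps by auto
  have int_E: "\<And>m n. integrable P (E m n)" and int_S: "\<And>n. integrable P (S n)"
    using conv \<open>P \<in> Ps\<close> by (auto simp: uniform_L1_conv_def)
  have L1: "(\<lambda>m. \<integral>\<^sup>+ x. ennreal \<bar>E m n x - S n x\<bar> \<partial>P) \<longlonglongrightarrow> 0" for n
    using conv \<open>P \<in> Ps\<close> by (auto simp: uniform_L1_conv_def intro: tendsto_0_of_SUP_tendsto_0)
  have delta: "(\<lambda>m. delta_pos_exp P F E m n) \<longlonglongrightarrow> 0"
    using asm \<open>P \<in> Ps\<close> by (auto simp: asymptotic_supermartingale_def intro: tendsto_0_of_SUP_tendsto_0)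
  show "integrable P (S n)"
    by (rule int_S)
  interpret prob_space P
    by (fact P(1))
  interpret finite_measure_subalgebra P "Finf M F n"
    by unfold_locales (rule subalgebra_sets_eq[OF P(2) subalgebra_Finf[OF filt]])
  show "AE x in P. real_cond_exp P (Finf M F n) (S (Suc n)) x \<le> S n x"
    using set_integral_Suc_le_on_Finf[OF P filt int_E int_S L1 delta]
    by (intro real_cond_exp_le_of_set_integral_le[OF int_S int_S S_adapted])
qed

end
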